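(* Let $\alpha,\beta,\gamma$ be partitions with $\alpha_1\le 2$ and let $\Gamma$ be an LR-tableau of type $(\alpha,\beta,\gamma)$; let $x$ be the number of entries $1$ in $\Gamma$. Assume: (1) the number of entries $2$ in $\Gamma$ equals $x$ or $x-1$; (2) every row of $\Gamma$ contains at most one (non-empty) box; (3) if row $j$ contains an entry $2$ and row $i$ contains an entry $1$, then $j>i$. Then the poset $(\mathcal D_\Gamma,\le_{\rm arc})$ is isomorphic to the symmetric group $S_x$ with the Bruhat order.
   Context: For a partition $\lambda$, $\lambda'$ is its conjugate; the diagram of $\lambda$ is drawn with $\lambda'_i$ boxes in row $i$, so the $i$-th row of $\beta\setminus\gamma$ consists of the boxes in columns $\gamma'_i+1,\dots,\beta'_i$. With $\alpha_1\le2$, $\alpha'=(\alpha'_1,\alpha'_2)$. An LR-tableau of type $(\alpha,\beta,\gamma)$ is a filling of $\beta\setminus\gamma$ with $\alpha'_1$ entries $1$ and $\alpha'_2$ entries $2$, weakly increasing along rows, strictly increasing down columns, such that for each $c\ge0$ the number of entries $1$ in columns to the right of column $c$ is at least the number of entries $2$ there. Place the positive integers on a line in decreasing order from left to right. An arc is a pair $(m,n)$, $m>n$ positive integers (source $m$, target $n$); a pole at $n$ is regarded as an arc $(\infty,n)$. An arc diagram of type $(\alpha,\beta,\gamma)$ is a finite multiset of $\alpha'_2$ arcs and $\alpha'_1-\alpha'_2$ poles with, for each $i$, exactly $\beta'_i-\gamma'_i$ members having source or target $i$. It has LR type $\Gamma$ if for each $i$ the number of arcs with source $i$ equals the number of entries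 $2$ in row $i$ of $\Gamma$; $\mathcal D_\Gamma$ is the set of such diagrams. Moves: for $a>b>c>d$, (A) replaces arcs $(a,c),(b,d)$ by $(a,d),(b,c)$; (C) replaces them by $(a,b),(c,d)$; for $a>b>c$, (B) replaces arc $(a,c)$ and pole $(\infty,b)$ by arc $(a,b)$ and pole $(\infty,c)$; (D) replaces them by arc $(b,c)$ and pole $(\infty,a)$; other members unchanged. $\Delta\le_{\rm arc}\Delta'$ iff $\Delta$ is obtained from $\Delta'$ by a finite (possibly empty) sequence of moves; $\mathcal D_\Gamma$ carries the restricted order. *)

theory Defs
  imports "HOL-Library.Multiset" "HOL-Library.Extended_Nat"
          "HOL-Combinatorics.Permutations" "HOL-Combinatorics.Transposition"
begin

definition is_partition :: "nat list \<Rightarrow> bool" where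
  "is_partition l \<longleftrightarrow> sorted_wrt (\<ge>) l \<and> (\<forall>p\<in>set l. 0 < p)"

text \<open>The i-th part (1-indexed), zero beyond the length.\<close>
definition part :: "nat list \<Rightarrow> nat \<Rightarrow> nat" where
  "part l i = (if 1 \<le> i \<and> i \<le> length l then l ! (i - 1) else 0)"

definition part_conj :: "nat list \<Rightarrow> nat list" where
  "part_conj l = map (\<lambda>j. length (filter (\<lambda>p. j \<le> p) l)) [1..<Suc (part l 1)]"

text \<open>Boxes of the skew diagram beta minus gamma: row i (i \<ge> 1) consists of the
  columns gamma'_i+1, ..., beta'_i.\<close>
definition in_skew :: "nat list \<Rightarrow> nat list \<Rightarrow> nat \<Rightarrow> nat \<Rightarrow> bool" where
  "in_skew \<beta> \<gamma> i c \<longleftrightarrow> 1 \<le> i \<and> part (part_conj \<gamma>) i < c \<and> c \<le> part (part_conj \<beta>) i"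

definition entry_count :: "nat list \<Rightarrow> nat list \<Rightarrow> (nat \<Rightarrow> nat \<Rightarrow> nat) \<Rightarrow> nat \<Rightarrow> nat" where
  "entry_count \<beta> \<gamma> T k = card {(i, c). in_skew \<beta> \<gamma> i c \<and> T i c = k}"

definition row_count :: "nat list \<Rightarrow> nat list \<Rightarrow> (nat \<Rightarrow> nat \<Rightarrow> nat) \<Rightarrow> nat \<Rightarrow> nat \<Rightarrow> nat" where
  "row_count \<beta> \<gamma> T k i = card {c. in_skew \<beta> \<gamma> i c \<and> T i c = k}"

text \<open>LR-tableau of type (alpha, beta, gamma); the filling T assigns to box (row i, column c)
  the entry T i c (values outside the skew diagram are irrelevant).\<close>
definition LR_tableau :: "nat list \<Rightarrow> nat list \<Rightarrow> nat list \<Rightarrow> (nat \<Rightarrow> nat \<Rightarrow> nat) \<Rightarrow> bool" where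
  "LR_tableau \<alpha> \<beta> \<gamma> T \<longleftrightarrow>
     (\<forall>i. part \<gamma> i \<le> part \<beta> i) \<and>
     (\<forall>i c. in_skew \<beta> \<gamma> i c \<longrightarrow> T i c \<in> {1, 2}) \<and>
     entry_count \<beta> \<gamma> T 1 = part (part_conj \<alpha>) 1 \<and>
     entry_count \<beta> \<gamma> T 2 = part (part_conj \<alpha>) 2 \<and>
     (\<forall>i c c'. in_skew \<beta> \<gamma> i c \<and> in_skew \<beta> \<gamma> i c' \<and> c \<le> c' \<longrightarrow> T i c \<le> T i c') \<and>
     (\<forall>i i' c. in_skew \<beta> \<gamma> i c \<and> in_skew \<beta> \<gamma> i' c \<and> i < i' \<longrightarrow> T i c < T i' c) \<and>
     (\<forall>c0. card {(i, c). in_skew \<beta> \<gamma> i c \<and> c0 < c \<and> T i c = 2}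
             \<le> card {(i, c). in_skew \<beta> \<gamma> i c \<and> c0 < c \<and> T i c = 1})"

text \<open>A member (s, t): an arc (m, n) is (enat m, n) with m > n \<ge> 1; a pole at n is (\<infinity>, n).\<close>
definition arc_diagram :: "nat list \<Rightarrow> nat list \<Rightarrow> nat list \<Rightarrow> (enat \<times> nat) multiset \<Rightarrow> bool" where
  "arc_diagram \<alpha> \<beta> \<gamma> D \<longleftrightarrow>
     (\<forall>(s, t)\<in>#D. 1 \<le> t \<and> enat t < s) \<and>
     size (filter_mset (\<lambda>(s, t). s \<noteq> \<infinity>) D) = part (part_conj \<alpha>) 2 \<and>
     size (filter_mset (\<lambda>(s, t). s = \<infinity>) D) = part (part_conj \<alpha>) 1 - part (part_conj \<alpha>) 2 \<and>
     (\<forall>i\<ge>1. size (filter_mset (\<lambda>(s, t). s = enat i \<or> t = i) D)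
              = part (part_conj \<beta>) i - part (part_conj \<gamma>) i)"

definition has_LR_type :: "nat list \<Rightarrow> nat list \<Rightarrow> (nat \<Rightarrow> nat \<Rightarrow> nat) \<Rightarrow> (enat \<times> nat) multiset \<Rightarrow> bool" where
  "has_LR_type \<beta> \<gamma> T D \<longleftrightarrow>
     (\<forall>i\<ge>1. size (filter_mset (\<lambda>(s, t). s = enat i) D) = row_count \<beta> \<gamma> T 2 i)"

definition D_Gamma :: "nat list \<Rightarrow> nat list \<Rightarrow> nat list \<Rightarrow> (nat \<Rightarrow> nat \<Rightarrow> nat) \<Rightarrow> (enat \<times> nat) multiset set" where
  "D_Gamma \<alpha> \<beta> \<gamma> T = {D. arc_diagram \<alpha> \<beta> \<gamma> D \<and> has_LR_type \<beta> \<gamma> T D}"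

text \<open>arc_move D D': D' is obtained from D by one of the moves (A),(B),(C),(D).\<close>
definition arc_move :: "(enat \<times> nat) multiset \<Rightarrow> (enat \<times> nat) multiset \<Rightarrow> bool" where
  "arc_move D D' \<longleftrightarrow>
    (\<exists>M a b c d. a > b \<and> b > c \<and> c > d \<and> d \<ge> 1 \<and>
        D = M + {#(enat a, c), (enat b, d)#} \<and>
        (D' = M + {#(enat a, d), (enat b, c)#} \<or> D' = M + {#(enat a, b), (enat c, d)#})) \<or>
    (\<exists>M a b c. a > b \<and> b > c \<and> c \<ge> 1 \<and>
        D = M + {#(enat a, c), (\<infinity>, b)#} \<and>
        (D' = M + {#(enat a, b), (\<infinity>, c)#} \<or> D' = M + {#(enat b, c), (\<infinity>, a)#}))"

definition arc_le :: "(enat \<times> nat) multiset \<Rightarrow> (enat \<times> nat) multiset \<Rightarrow> bool" where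
  "arc_le \<Delta> \<Delta>' \<longleftrightarrow> arc_move\<^sup>*\<^sup>* \<Delta>' \<Delta>"

definition inversions :: "nat \<Rightarrow> (nat \<Rightarrow> nat) \<Rightarrow> nat" where
  "inversions x w = card {(i, j). 1 \<le> i \<and> i < j \<and> j \<le> x \<and> w j < w i}"

definition bruhat_step :: "nat \<Rightarrow> (nat \<Rightarrow> nat) \<Rightarrow> (nat \<Rightarrow> nat) \<Rightarrow> bool" where
  "bruhat_step x u v \<longleftrightarrow>
     (\<exists>i j. 1 \<le> i \<and> i < j \<and> j \<le> x \<and> v = u \<circ> Transposition.transpose i j
            \<and> inversions x u < inversions x v)"

definition bruhat_le :: "nat \<Rightarrow> (nat \<Rightarrow> nat) \<Rightarrow> (nat \<Rightarrow> nat) \<Rightarrow> bool" where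
  "bruhat_le x u v \<longleftrightarrow> (bruhat_step x)\<^sup>*\<^sup>* u v"

end

theory Submission
  imports Defs
begin

text \<open>Under the hypotheses every row has at most one box and the x rows carrying an entry 1 lie
  above the rows carrying an entry 2. Hence in a diagram of D_Gamma every 1-row is the target of
  exactly one member, and every 2-row (and \<open>\<infinity>\<close>, if there is a pole) the source of exactly one
  member: listing the sources decreasingly and the targets increasingly, the diagram is the graph
  of a permutation w of {1..x}. A move (A) or (B) uncrosses two members, which is right
  multiplication of w by a transposition removing an inversion. Moves (C) and (D) strictly decrease
  the sum of the finite sources, which is the same for all these graphs, so they never occur in a
  chain of moves between two diagrams of D_Gamma.\<close>

section \<open>Bruhat order\<close>

lemma inversions_compose_transpose_less:
  assumes "1 \<le> p" "p < q" "q \<le> x" "u p < u q"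
  shows "inversions x u < inversions x (u \<circ> transpose p q)"
proof -
  define I where "I w = {(i, j). 1 \<le> i \<and> i < j \<and> j \<le> x \<and> w j < w i}" for w :: "nat \<Rightarrow> nat"
  define v where "v = u \<circ> transpose p q"
  \<comment> \<open>Pairs with an entry strictly between p and q are kept; the others are moved along with p, q.\<close>
  define \<phi> where "\<phi> = (\<lambda>(i, j). if p < i \<and> i < q \<or> p < j \<and> j < q then (i, j)
                                    else (transpose p q i, transpose p q j))"
  have fin: "finite (I v)"
    by (rule finite_subset[of _ "{1..x} \<times> {1..x}"]) (auto simp: I_def)
  have pq: "(p, q) \<in> I v"
    using assms by (auto simp: I_def v_def transpose_def)
  have "inj_on \<phi> (I u)"
    using assms by (auto simp: inj_on_def \<phi>_def I_def transpose_def split: if_splits)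
  then have "card (I u) = card (\<phi> ` I u)"
    by (simp add: card_image)
  also have "\<dots> \<le> card (I v - {(p, q)})"
  proof (rule card_mono)
    show "\<phi> ` I u \<subseteq> I v - {(p, q)}"
    proof
      fix y assume "y \<in> \<phi> ` I u"
      then obtain i j where "(i, j) \<in> I u" and "y = \<phi> (i, j)"
        by auto
      then show "y \<in> I v - {(p, q)}"
        using assms by (auto simp: \<phi>_def I_def v_def transpose_def split: if_splits)
    qed
  qed (use fin in simp)
  also have "\<dots> < card (I v)"
    using card_Diff1_less[OF fin pq] .
  finally show ?thesis
    by (simp add: inversions_def I_def v_def)
qed

lemma comp_transpose_comp_transpose [simp]: "u \<circ> transpose p q \<circ> transpose p q = u"
  by (simp add: fun_eq_iff)

lemma bruhat_step_iff:
  assumes "u permutes {1..x}"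
  shows "bruhat_step x u v \<longleftrightarrow>
    (\<exists>p q. 1 \<le> p \<and> p < q \<and> q \<le> x \<and> u p < u q \<and> v = u \<circ> transpose p q)"
proof
  assume "bruhat_step x u v"
  then obtain p q where pq: "1 \<le> p" "p < q" "q \<le> x" and v: "v = u \<circ> transpose p q"
    and inv: "inversions x u < inversions x v"
    unfolding bruhat_step_def by blast
  have "u p \<noteq> u q"
    using permutes_inj[OF assms] pq by (auto dest: injD)
  moreover have "\<not> u q < u p"
  proof
    assume "u q < u p"
    then have "inversions x v < inversions x (v \<circ> transpose p q)"
      using pq by (intro inversions_compose_transpose_less) (auto simp: v)
    then show False
      using inv by (simp add: v)
  qed
  ultimately show "\<exists>p q. 1 \<le> p \<and> p < q \<and> q \<le> x \<and> u p < u q \<and> v = u \<circ> transpose p q"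
    using pq v by (metis linorder_neqE_nat)
next
  assume "\<exists>p q. 1 \<le> p \<and> p < q \<and> q \<le> x \<and> u p < u q \<and> v = u \<circ> transpose p q"
  then show "bruhat_step x u v"
    unfolding bruhat_step_def using inversions_compose_transpose_less by blast
qed

lemma bruhat_le_permutes:
  assumes "bruhat_le x u v" "u permutes {1..x}"
  shows "v permutes {1..x}"
  using assms unfolding bruhat_le_def
  by (induction rule: rtranclp_induct)
     (auto simp: bruhat_step_def intro!: permutes_compose permutes_swap_id)

lemma count_image_mset_eq_size_filter:
  "count (image_mset f M) y = size (filter_mset (\<lambda>x. f x = y) M)"
  by (induction M) auto

lemma mset_pairs_eq_image_bij:
  assumes "finite A" "finite B"
    and "image_mset fst D = image_mset f (mset_set A)"
    and "image_mset snd D = image_mset g (mset_set B)"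
  shows "\<exists>h. bij_betw h A B \<and> D = image_mset (\<lambda>k. (f k, g (h k))) (mset_set A)"
  using assms
proof (induction A arbitrary: B D)
  case empty
  then show ?case
    by (auto simp: mset_set_empty_iff bij_betw_def)
next
  case (insert a A)
  have "f a \<in># image_mset fst D"
    using insert.hyps by (simp add: insert.prems)
  then obtain t where at: "(f a, t) \<in># D"
    by auto
  then have "t \<in># image_mset snd D"
    by force
  then obtain j where j: "j \<in> B" "t = g j"
    using insert.prems(1,3) by auto
  define D' where "D' = D - {#(f a, g j)#}"
  have D: "D = add_mset (f a, g j) D'"
    using at j by (simp add: D'_def)
  have "image_mset fst D' = image_mset f (mset_set A)"
    using insert.prems(2) insert.hyps by (simp add: D)
  moreover have "image_mset snd D' = image_mset g (mset_set (B - {j}))"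
    using insert.prems(1,3) j by (simp add: D mset_set.remove)
  ultimately obtain h where h: "bij_betw h A (B - {j})"
    and D': "D' = image_mset (\<lambda>k. (f k, g (h k))) (mset_set A)"
    using insert.IH[of "B - {j}" D'] insert.prems(1) by auto
  have "bij_betw (h(a := j)) A (B - {j})"
    using h insert.hyps(2) by (subst bij_betw_cong[of A _ h]) auto
  then have "bij_betw (h(a := j)) (A \<union> {a}) (B - {j} \<union> {j})"
    using insert.hyps(2) notIn_Un_bij_betw[of a A "h(a := j)" "B - {j}"] by simp
  then have "bij_betw (h(a := j)) (insert a A) B"
    using j by (simp add: insert_absorb)
  moreover have "D = image_mset (\<lambda>k. (f k, g ((h(a := j)) k))) (mset_set (insert a A))"
    using insert.hyps by (auto simp: D D' intro!: image_mset_cong)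
  ultimately show ?case
    by blast
qed

lemma mset_sorted_list_of_set: "mset (sorted_list_of_set A) = mset_set A"
  by (metis mset_sorted_list_of_multiset sorted_list_of_mset_set)

lemma image_mset_nth_pred:
  "image_mset (\<lambda>k. xs ! (k - 1)) (mset_set {1..length xs}) = mset xs"
proof -
  have "[1..<Suc (length xs)] = map Suc [0..<length xs]"
    by (metis One_nat_def map_Suc_upt)
  then have "map (\<lambda>k. xs ! (k - 1)) [1..<Suc (length xs)] = map (nth xs) [0..<length xs]"
    by simp
  then show ?thesis
    by (metis atLeastLessThanSuc_atLeastAtMost map_nth mset_map mset_upt)
qed

lemma strict_mono_on_nth_pred:
  assumes "sorted_wrt (<) xs"
  shows "strict_mono_on {1..length xs} (\<lambda>k. xs ! (k - 1))"
proof (rule strict_mono_onI)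
  fix r s
  assume "r \<in> {1..length xs}" "s \<in> {1..length xs}" "r < s"
  then show "xs ! (r - 1) < xs ! (s - 1)"
    using sorted_wrt_nth_less[OF assms, of "r - 1" "s - 1"] by simp
qed

lemma strict_antimono_on_nth_pred:
  assumes "sorted_wrt (>) xs"
  shows "strict_antimono_on {1..length xs} (\<lambda>k. xs ! (k - 1))"
proof (rule monotone_onI)
  fix r s
  assume "r \<in> {1..length xs}" "s \<in> {1..length xs}" "r < s"
  then show "xs ! (s - 1) < xs ! (r - 1)"
    using sorted_wrt_nth_less[OF assms, of "r - 1" "s - 1"] by simp
qed

section \<open>Arc diagrams and moves\<close>

definition finite_source_sum :: "(enat \<times> nat) multiset \<Rightarrow> nat" where
  "finite_source_sum D = (\<Sum>(s, t)\<in>#D. case s of enat n \<Rightarrow> n | \<infinity> \<Rightarrow> 0)"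

lemma finite_source_sum_simps [simp]:
  "finite_source_sum {#} = 0"
  "finite_source_sum (M + N) = finite_source_sum M + finite_source_sum N"
  "finite_source_sum (add_mset (s, t) M) = (case s of enat n \<Rightarrow> n | \<infinity> \<Rightarrow> 0) + finite_source_sum M"
  by (simp_all add: finite_source_sum_def)

lemma arc_move_cases:
  assumes "arc_move D D'"
  shows "finite_source_sum D' < finite_source_sum D \<or>
    (\<exists>M s s' t t'. s' < s \<and> t' < t \<and>
       D = M + {#(s, t), (s', t')#} \<and> D' = M + {#(s, t'), (s', t)#})"
proof -
  from assms consider
      (AC) M a b c d where "b < a" "c < b" "d < c" "D = M + {#(enat a, c), (enat b, d)#}"
        "D' = M + {#(enat a, d), (enat b, c)#} \<or> D' = M + {#(enat a, b), (enat c, d)#}"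
    | (BD) M a b c where "b < a" "c < b" "D = M + {#(enat a, c), (\<infinity>, b)#}"
        "D' = M + {#(enat a, b), (\<infinity>, c)#} \<or> D' = M + {#(enat b, c), (\<infinity>, a)#}"
    unfolding arc_move_def by blast
  then show ?thesis
  proof cases
    case AC
    from AC(5) show ?thesis
    proof
      assume "D' = M + {#(enat a, d), (enat b, c)#}"
      then show ?thesis
        using AC by (intro disjI2 exI[of _ M] exI[of _ "enat a"] exI[of _ "enat b"]) auto
    qed (use AC in simp)
  next
    case BD
    from BD(4) show ?thesis
    proof
      assume "D' = M + {#(enat a, b), (\<infinity>, c)#}"
      then show ?thesis
        using BD by (intro disjI2 exI[of _ M] exI[of _ \<infinity>] exI[of _ "enat a"])
          (auto simp: add_mset_commute)
    qed (use BD in simp)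
  qed
qed

lemma finite_source_sum_arc_moves:
  "arc_move\<^sup>*\<^sup>* D D' \<Longrightarrow> finite_source_sum D' \<le> finite_source_sum D"
  by (induction rule: rtranclp_induct) (auto dest!: arc_move_cases)

lemma arc_move_uncross:
  assumes "enat t < s'" "s' < s" "t' < t" "1 \<le> t'"
  shows "arc_move (M + {#(s, t), (s', t')#}) (M + {#(s, t'), (s', t)#})"
proof -
  obtain b where b: "s' = enat b"
    using assms(2) by (cases s') auto
  show ?thesis
  proof (cases s)
    case (enat a)
    then show ?thesis
      using assms unfolding arc_move_def b by (intro disjI1 exI[of _ M]) auto
  next
    case infinity
    then show ?thesis
      using assms unfolding arc_move_def b
      by (intro disjI2 exI[of _ M] exI[of _ b] exI[of _ t] exI[of _ t'])
         (auto simp: add_mset_commute)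
  qed
qed

lemma size_filter_source_or_target:
  assumes "\<forall>(s, t)\<in>#D. enat t < s"
  shows "size (filter_mset (\<lambda>(s, t). s = enat i \<or> t = i) D)
         = count (image_mset fst D) (enat i) + count (image_mset snd D) i"
  using assms by (induction D) auto

lemma size_filter_finite_sources:
  "size (filter_mset (\<lambda>(s, t). s \<noteq> \<infinity>) D) = size D - count (image_mset fst D) \<infinity>"
proof -
  have "size (filter_mset (\<lambda>(s, t). s \<noteq> \<infinity>) D) + size (filter_mset (\<lambda>(s, t). s = \<infinity>) D)
        = size D"
    by (simp flip: size_union add: union_filter_mset_complement)
  moreover have "size (filter_mset (\<lambda>(s, t). s = \<infinity>) D) = count (image_mset fst D) \<infinity>"
    by (simp add: count_image_mset_eq_size_filter case_prod_unfold)
  ultimately show ?thesis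
    by linarith
qed

lemma arc_diagram_counts_iff:
  fixes D :: "(enat \<times> nat) multiset"
  assumes members: "\<forall>(s, t)\<in>#D. 1 \<le> t \<and> enat t < s"
    and R: "finite R1" "finite R2" "0 \<notin> R1" "0 \<notin> R2"
  shows "(size (filter_mset (\<lambda>(s, t). s = \<infinity>) D) = n \<and>
          (\<forall>i\<ge>1. size (filter_mset (\<lambda>(s, t). s = enat i) D) = count (mset_set R2) i) \<and>
          (\<forall>i\<ge>1. size (filter_mset (\<lambda>(s, t). s = enat i \<or> t = i) D)
                   = count (mset_set R1) i + count (mset_set R2) i))
     \<longleftrightarrow> image_mset fst D = replicate_mset n \<infinity> + mset_set (enat ` R2) \<and>
         image_mset snd D = mset_set R1"
proof -
  have src: "size (filter_mset (\<lambda>(s, t). s = a) D) = count (image_mset fst D) a" for a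
    by (simp add: count_image_mset_eq_size_filter case_prod_unfold)
  have deg: "size (filter_mset (\<lambda>(s, t). s = enat i \<or> t = i) D)
             = count (image_mset fst D) (enat i) + count (image_mset snd D) i" for i
    using members by (intro size_filter_source_or_target) auto
  have src0: "count (image_mset fst D) (enat 0) = 0" and tgt0: "count (image_mset snd D) 0 = 0"
    using members by (fastforce simp: count_eq_zero_iff)+
  have count_enat: "count (mset_set (enat ` R2)) s
      = (case s of enat i \<Rightarrow> count (mset_set R2) i | \<infinity> \<Rightarrow> 0)" for s
    using R by (cases s) (auto simp: count_mset_set')
  have fst_eq: "image_mset fst D = replicate_mset n \<infinity> + mset_set (enat ` R2) \<longleftrightarrow>
      count (image_mset fst D) \<infinity> = n \<and> (\<forall>i\<ge>1. count (image_mset fst D) (enat i) = count (mset_set R2) i)"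
  proof (intro iffI multiset_eqI)
    fix s
    assume counts: "count (image_mset fst D) \<infinity> = n \<and>
      (\<forall>i\<ge>1. count (image_mset fst D) (enat i) = count (mset_set R2) i)"
    show "count (image_mset fst D) s = count (replicate_mset n \<infinity> + mset_set (enat ` R2)) s"
    proof (cases s)
      case (enat i)
      then show ?thesis
        using counts src0 R(4) by (cases "i = 0") (auto simp: count_enat)
    qed (use counts in \<open>simp add: count_enat\<close>)
  qed (simp_all add: count_enat)
  have snd_eq: "image_mset snd D = mset_set R1 \<longleftrightarrow>
      (\<forall>i\<ge>1. count (image_mset snd D) i = count (mset_set R1) i)"
  proof (intro iffI multiset_eqI)
    fix i
    assume "\<forall>i\<ge>1. count (image_mset snd D) i = count (mset_set R1) i"
    then show "count (image_mset snd D) i = count (mset_set R1) i"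
      using tgt0 R(3) by (cases "i = 0") auto
  qed simp
  show ?thesis
    unfolding fst_eq snd_eq src deg by auto
qed

section \<open>Diagrams of permutations\<close>

locale arc_frame =
  fixes x :: nat and src :: "nat \<Rightarrow> enat" and tgt :: "nat \<Rightarrow> nat"
  assumes src_antimono: "strict_antimono_on {1..x} src"
    and tgt_mono: "strict_mono_on {1..x} tgt"
    and tgt_less_src: "\<And>p q. p \<in> {1..x} \<Longrightarrow> q \<in> {1..x} \<Longrightarrow> enat (tgt q) < src p"
    and tgt_pos: "\<And>p. p \<in> {1..x} \<Longrightarrow> 1 \<le> tgt p"
begin

definition diagram_of :: "(nat \<Rightarrow> nat) \<Rightarrow> (enat \<times> nat) multiset" where
  "diagram_of w = {#(src k, tgt (w k)). k \<in># mset_set {1..x}#}"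

lemma src_less_iff:
  assumes "p \<in> {1..x}" "q \<in> {1..x}"
  shows "src q < src p \<longleftrightarrow> p < q"
  using assms monotone_onD[OF src_antimono, of p q] monotone_onD[OF src_antimono, of q p]
  by (cases p q rule: linorder_cases) auto

lemma inj_on_src: "inj_on src {1..x}"
  using src_antimono strict_antimono_iff_antimono by blast

lemma inj_on_tgt: "inj_on tgt {1..x}"
  using tgt_mono by (rule strict_mono_on_imp_inj_on)

lemma diagram_of_eq_iff:
  assumes "u permutes {1..x}" "w permutes {1..x}"
  shows "diagram_of u = diagram_of w \<longleftrightarrow> u = w"
proof
  assume eq: "diagram_of u = diagram_of w"
  show "u = w"
  proof
    fix k
    show "u k = w k"
    proof (cases "k \<in> {1..x}")
      case True
      then have "(src k, tgt (u k)) \<in># diagram_of u"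
        by (simp add: diagram_of_def)
      then have "(src k, tgt (u k)) \<in># diagram_of w"
        by (simp only: eq)
      then obtain k' where k': "k' \<in> {1..x}" "src k = src k'" "tgt (u k) = tgt (w k')"
        by (auto simp: diagram_of_def)
      then have "k' = k"
        using inj_on_src True by (auto dest: inj_onD)
      then show ?thesis
        using k' True inj_on_tgt permutes_in_image[OF assms(1)] permutes_in_image[OF assms(2)]
        by (auto dest: inj_onD)
    qed (metis assms permutes_not_in)
  qed
qed simp

lemma member_diagram_of:
  assumes "w permutes {1..x}" "(s, t) \<in># diagram_of w"
  shows "1 \<le> t \<and> enat t < s"
  using assms tgt_pos tgt_less_src permutes_in_image[OF assms(1)] by (auto simp: diagram_of_def)

lemma diagrams_with_projections:
  "{D. (\<forall>(s, t)\<in>#D. 1 \<le> t \<and> enat t < s) \<and>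
       image_mset fst D = image_mset src (mset_set {1..x}) \<and>
       image_mset snd D = image_mset tgt (mset_set {1..x})}
   = diagram_of ` {w. w permutes {1..x}}"
proof (intro equalityI subsetI)
  fix D
  assume "D \<in> {D. (\<forall>(s, t)\<in>#D. 1 \<le> t \<and> enat t < s) \<and>
                 image_mset fst D = image_mset src (mset_set {1..x}) \<and>
                 image_mset snd D = image_mset tgt (mset_set {1..x})}"
  then obtain h where h: "bij_betw h {1..x} {1..x}"
    and D: "D = {#(src k, tgt (h k)). k \<in># mset_set {1..x}#}"
    using mset_pairs_eq_image_bij[of "{1..x}" "{1..x}" D src tgt] by auto
  define w where "w k = (if k \<in> {1..x} then h k else k)" for k
  have "bij_betw w {1..x} {1..x}"
    using h by (subst bij_betw_cong[of _ w h]) (auto simp: w_def)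
  then have "w permutes {1..x}"
    by (rule bij_imp_permutes) (auto simp: w_def)
  moreover have "D = diagram_of w"
    by (auto simp: D diagram_of_def w_def intro!: image_mset_cong)
  ultimately show "D \<in> diagram_of ` {w. w permutes {1..x}}"
    by blast
next
  fix D
  assume "D \<in> diagram_of ` {w. w permutes {1..x}}"
  then obtain w where w: "w permutes {1..x}" and D: "D = diagram_of w"
    by blast
  have "image_mset snd D = image_mset tgt (image_mset w (mset_set {1..x}))"
    by (simp add: D diagram_of_def image_mset.compositionality o_def)
  also have "\<dots> = image_mset tgt (mset_set {1..x})"
    using w by (simp add: image_mset_mset_set permutes_inj_on permutes_image)
  finally have "image_mset snd D = image_mset tgt (mset_set {1..x})" .
  moreover have "image_mset fst D = image_mset src (mset_set {1..x})"
    by (simp add: D diagram_of_def image_mset.compositionality o_def)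
  moreover have "\<forall>(s, t)\<in>#D. 1 \<le> t \<and> enat t < s"
    using member_diagram_of[OF w] by (auto simp: D)
  ultimately show "D \<in> {D. (\<forall>(s, t)\<in>#D. 1 \<le> t \<and> enat t < s) \<and>
                       image_mset fst D = image_mset src (mset_set {1..x}) \<and>
                       image_mset snd D = image_mset tgt (mset_set {1..x})}"
    by blast
qed

lemma diagram_of_split:
  assumes "p \<in> {1..x}" "q \<in> {1..x}" "p \<noteq> q"
  shows "diagram_of w = {#(src k, tgt (w k)). k \<in># mset_set ({1..x} - {p, q})#}
                        + {#(src p, tgt (w p)), (src q, tgt (w q))#}"
proof -
  have "mset_set {1..x} = add_mset p (mset_set ({1..x} - {p}))"
    using assms by (intro mset_set.remove) auto
  also have "mset_set ({1..x} - {p}) = add_mset q (mset_set ({1..x} - {p} - {q}))"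
    using assms by (intro mset_set.remove) auto
  also have "{1..x} - {p} - {q} = {1..x} - {p, q}"
    by auto
  finally have "mset_set {1..x} = add_mset p (add_mset q (mset_set ({1..x} - {p, q})))"
    by simp
  then show ?thesis
    by (simp add: diagram_of_def add_mset_commute)
qed

lemma diagram_of_transpose:
  assumes "p \<in> {1..x}" "q \<in> {1..x}" "p \<noteq> q"
  shows "diagram_of (w \<circ> transpose p q)
           = {#(src k, tgt (w k)). k \<in># mset_set ({1..x} - {p, q})#}
             + {#(src p, tgt (w q)), (src q, tgt (w p))#}"
proof -
  have "{#(src k, tgt ((w \<circ> transpose p q) k)). k \<in># mset_set ({1..x} - {p, q})#}
      = {#(src k, tgt (w k)). k \<in># mset_set ({1..x} - {p, q})#}"
    by (intro image_mset_cong) (auto simp: transpose_def)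
  then show ?thesis
    using diagram_of_split[OF assms, of "w \<circ> transpose p q"] assms by simp
qed

lemma arc_move_diagram_of_transpose:
  assumes w: "w permutes {1..x}" and pq: "1 \<le> p" "p < q" "q \<le> x" "w q < w p"
  shows "arc_move (diagram_of w) (diagram_of (w \<circ> transpose p q))"
proof -
  have P: "p \<in> {1..x}" "q \<in> {1..x}" "p \<noteq> q"
    using pq by auto
  have W: "w p \<in> {1..x}" "w q \<in> {1..x}"
    using P permutes_in_image[OF w] by auto
  have "arc_move ({#(src k, tgt (w k)). k \<in># mset_set ({1..x} - {p, q})#}
                    + {#(src p, tgt (w p)), (src q, tgt (w q))#})
                 ({#(src k, tgt (w k)). k \<in># mset_set ({1..x} - {p, q})#}
                    + {#(src p, tgt (w q)), (src q, tgt (w p))#})"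
  proof (rule arc_move_uncross)
    show "enat (tgt (w p)) < src q"
      using tgt_less_src P W by blast
    show "src q < src p"
      using src_less_iff P pq by blast
    show "tgt (w q) < tgt (w p)"
      using strict_mono_on_less[OF tgt_mono] W pq by blast
    show "1 \<le> tgt (w q)"
      using tgt_pos W by blast
  qed
  then show ?thesis
    by (simp only: diagram_of_split[OF P, of w] diagram_of_transpose[OF P, of w])
qed

lemma uncross_diagram_of:
  assumes w: "w permutes {1..x}" and D: "diagram_of w = M + {#(s, t), (s', t')#}"
    and "s' < s" "t' < t"
  shows "\<exists>p q. 1 \<le> p \<and> p < q \<and> q \<le> x \<and> w q < w p \<and>
           M + {#(s, t'), (s', t)#} = diagram_of (w \<circ> transpose p q)"
proof -
  have "(s, t) \<in># diagram_of w" "(s', t') \<in># diagram_of w"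
    by (simp_all add: D)
  then obtain p q where P: "p \<in> {1..x}" "q \<in> {1..x}"
    and p: "s = src p" "t = tgt (w p)" and q: "s' = src q" "t' = tgt (w q)"
    by (auto simp: diagram_of_def)
  have W: "w p \<in> {1..x}" "w q \<in> {1..x}"
    using P permutes_in_image[OF w] by auto
  have "p < q"
    using src_less_iff[OF P] \<open>s' < s\<close> p q by simp
  moreover have "w q < w p"
    using strict_mono_on_less[OF tgt_mono W(2,1)] \<open>t' < t\<close> p q by simp
  moreover have "M = {#(src k, tgt (w k)). k \<in># mset_set ({1..x} - {p, q})#}"
    using D diagram_of_split[OF P, of w] \<open>p < q\<close> p q by simp
  ultimately show ?thesis
    using P p q diagram_of_transpose[OF P, of w] by (intro exI[of _ p] exI[of _ q]) auto
qed

lemma bruhat_step_compose_transpose: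
  assumes w: "w permutes {1..x}" and pq: "1 \<le> p" "p < q" "q \<le> x" "w q < w p"
  shows "bruhat_step x (w \<circ> transpose p q) w"
proof -
  have "w \<circ> transpose p q permutes {1..x}"
    using w pq by (auto intro!: permutes_compose permutes_swap_id)
  moreover have "(w \<circ> transpose p q) p < (w \<circ> transpose p q) q \<and> w = w \<circ> transpose p q \<circ> transpose p q"
    using pq by simp
  ultimately show ?thesis
    using pq by (auto simp only: bruhat_step_iff)
qed

lemma bruhat_le_if_arc_moves:
  assumes "arc_move\<^sup>*\<^sup>* (diagram_of w) (diagram_of u)" "u permutes {1..x}" "w permutes {1..x}"
  shows "bruhat_le x u w"
  using assms
proof (induction "diagram_of w" arbitrary: w rule: converse_rtranclp_induct)
  case base
  then show ?case
    by (simp add: diagram_of_eq_iff bruhat_le_def)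
next
  case (step D)
  have "finite_source_sum (diagram_of u) \<le> finite_source_sum D"
    using step.hyps(2) by (rule finite_source_sum_arc_moves)
  moreover have "finite_source_sum (diagram_of u) = finite_source_sum (diagram_of w)"
    by (simp add: diagram_of_def finite_source_sum_def image_mset.compositionality o_def)
  ultimately obtain M s s' t t' where "s' < s" "t' < t"
    and "diagram_of w = M + {#(s, t), (s', t')#}" and D: "D = M + {#(s, t'), (s', t)#}"
    using arc_move_cases[OF step.hyps(1)] by fastforce
  then obtain p q where pq: "1 \<le> p" "p < q" "q \<le> x" "w q < w p"
    and "D = diagram_of (w \<circ> transpose p q)"
    using uncross_diagram_of[OF step.prems(2)] by metis
  moreover have "w \<circ> transpose p q permutes {1..x}"
    using step.prems(2) pq by (auto intro!: permutes_compose permutes_swap_id)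
  ultimately have "bruhat_le x u (w \<circ> transpose p q)"
    using step.prems(1) step.hyps(3) by blast
  then show ?case
    using bruhat_step_compose_transpose[OF step.prems(2) pq]
    unfolding bruhat_le_def by simp
qed

lemma arc_moves_if_bruhat_le:
  assumes "bruhat_le x u w" "u permutes {1..x}"
  shows "arc_move\<^sup>*\<^sup>* (diagram_of w) (diagram_of u)"
  using assms unfolding bruhat_le_def
proof (induction rule: rtranclp_induct)
  case (step v w)
  have "v permutes {1..x}"
    using step bruhat_le_permutes unfolding bruhat_le_def by blast
  with step.hyps(2) obtain p q where pq: "1 \<le> p" "p < q" "q \<le> x" "v p < v q"
    and w: "w = v \<circ> transpose p q"
    by (auto simp: bruhat_step_iff)
  have "w permutes {1..x}"
    using \<open>v permutes {1..x}\<close> pq w by (auto intro!: permutes_compose permutes_swap_id)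
  then have "arc_move (diagram_of w) (diagram_of v)"
    using arc_move_diagram_of_transpose[of w p q] pq by (simp add: w transpose_def)
  then show ?case
    using step.IH step.prems by (meson converse_rtranclp_into_rtranclp)
qed simp

lemma arc_le_diagram_of_iff:
  assumes "u permutes {1..x}" "w permutes {1..x}"
  shows "arc_le (diagram_of u) (diagram_of w) \<longleftrightarrow> bruhat_le x u w"
  using assms bruhat_le_if_arc_moves arc_moves_if_bruhat_le unfolding arc_le_def by blast

theorem diagrams_order_iso_bruhat:
  "\<exists>f. bij_betw f (diagram_of ` {w. w permutes {1..x}}) {w. w permutes {1..x}} \<and>
     (\<forall>\<Delta>\<in>diagram_of ` {w. w permutes {1..x}}. \<forall>\<Delta>'\<in>diagram_of ` {w. w permutes {1..x}}.
        arc_le \<Delta> \<Delta>' \<longleftrightarrow> bruhat_le x (f \<Delta>) (f \<Delta>'))"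
proof (intro exI conjI)
  have "inj_on diagram_of {w. w permutes {1..x}}"
    by (auto intro!: inj_onI simp: diagram_of_eq_iff)
  then show "bij_betw (inv_into {w. w permutes {1..x}} diagram_of)
               (diagram_of ` {w. w permutes {1..x}}) {w. w permutes {1..x}}"
    by (simp add: bij_betw_inv_into inj_on_imp_bij_betw)
  show "\<forall>\<Delta>\<in>diagram_of ` {w. w permutes {1..x}}. \<forall>\<Delta>'\<in>diagram_of ` {w. w permutes {1..x}}.
          arc_le \<Delta> \<Delta>' \<longleftrightarrow> bruhat_le x (inv_into {w. w permutes {1..x}} diagram_of \<Delta>)
                                  (inv_into {w. w permutes {1..x}} diagram_of \<Delta>')"
    using \<open>inj_on diagram_of _\<close> by (auto simp: arc_le_diagram_of_iff)
qed

end

lemma arc_frame_exists: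
  assumes "finite R1" "finite R2" "0 \<notin> R1" and below: "\<forall>i\<in>R1. \<forall>j\<in>R2. i < j"
    and "card R2 \<le> card R1" "card R1 \<le> card R2 + 1"
  shows "\<exists>src tgt. arc_frame (card R1) src tgt \<and>
    image_mset src (mset_set {1..card R1}) = replicate_mset (card R1 - card R2) \<infinity> + mset_set (enat ` R2) \<and>
    image_mset tgt (mset_set {1..card R1}) = mset_set R1"
proof (intro exI conjI)
  define tgts where "tgts = sorted_list_of_set R1"
  define srcs where "srcs = replicate (card R1 - card R2) \<infinity> @ map enat (rev (sorted_list_of_set R2))"
  have len: "length tgts = card R1" "length srcs = card R1"
    using assms by (simp_all add: tgts_def srcs_def)
  have set_tgts: "set tgts = R1" and set_srcs: "set srcs \<subseteq> insert \<infinity> (enat ` R2)"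
    using assms by (auto simp: tgts_def srcs_def)
  have "card R1 - card R2 \<le> 1"
    using assms(6) by linarith
  then have "sorted_wrt (>) (replicate (card R1 - card R2) \<infinity>)"
    by (cases "card R1 - card R2") auto
  moreover have "sorted_wrt (>) (map enat (rev (sorted_list_of_set R2)))"
    by (simp add: sorted_wrt_map sorted_wrt_rev)
  ultimately have "sorted_wrt (>) srcs"
    by (auto simp: srcs_def sorted_wrt_append)
  show "arc_frame (card R1) (\<lambda>k. srcs ! (k - 1)) (\<lambda>k. tgts ! (k - 1))"
  proof
    show "strict_antimono_on {1..card R1} (\<lambda>k. srcs ! (k - 1))"
      using strict_antimono_on_nth_pred[OF \<open>sorted_wrt (>) srcs\<close>] len by simp
    show "strict_mono_on {1..card R1} (\<lambda>k. tgts ! (k - 1))"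
      using strict_mono_on_nth_pred[of tgts] len by (simp add: tgts_def)
    fix p q
    assume "p \<in> {1..card R1}" "q \<in> {1..card R1}"
    then have "srcs ! (p - 1) \<in> set srcs" "tgts ! (q - 1) \<in> set tgts"
      using len by (auto intro!: nth_mem)
    then have src: "srcs ! (p - 1) \<in> insert \<infinity> (enat ` R2)" and tgt: "tgts ! (q - 1) \<in> R1"
      using set_srcs set_tgts by auto
    show "enat (tgts ! (q - 1)) < srcs ! (p - 1)"
      using src tgt below by auto
    show "1 \<le> tgts ! (q - 1)"
      using tgt assms(3) by (metis Suc_leI gr0I One_nat_def)
  qed
  show "image_mset (\<lambda>k. srcs ! (k - 1)) (mset_set {1..card R1})
        = replicate_mset (card R1 - card R2) \<infinity> + mset_set (enat ` R2)"
    using image_mset_nth_pred[of srcs] len assms(2)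
    by (simp add: srcs_def image_mset_mset_set inj_on_def mset_sorted_list_of_set)
  show "image_mset (\<lambda>k. tgts ! (k - 1)) (mset_set {1..card R1}) = mset_set R1"
    using image_mset_nth_pred[of tgts] len assms(1) by (simp add: tgts_def mset_sorted_list_of_set)
qed

section \<open>Tableaux with one box per row\<close>

definition entry_rows :: "nat list \<Rightarrow> nat list \<Rightarrow> (nat \<Rightarrow> nat \<Rightarrow> nat) \<Rightarrow> nat \<Rightarrow> nat set" where
  "entry_rows \<beta> \<gamma> T k = {i. 0 < row_count \<beta> \<gamma> T k i}"

lemma skew_row_eq:
  "{c. in_skew \<beta> \<gamma> i c} = (if 1 \<le> i then {part (part_conj \<gamma>) i<..part (part_conj \<beta>) i} else {})"
  by (auto simp: in_skew_def)

lemma finite_skew_row: "finite {c. in_skew \<beta> \<gamma> i c}"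
  by (simp add: skew_row_eq)

lemma in_entry_rows_iff: "i \<in> entry_rows \<beta> \<gamma> T k \<longleftrightarrow> (\<exists>c. in_skew \<beta> \<gamma> i c \<and> T i c = k)"
proof -
  have "finite {c. in_skew \<beta> \<gamma> i c \<and> T i c = k}"
    by (rule finite_subset[OF _ finite_skew_row]) auto
  then show ?thesis
    by (auto simp: entry_rows_def row_count_def card_gt_0_iff)
qed

lemma entry_rows_pos: "i \<in> entry_rows \<beta> \<gamma> T k \<Longrightarrow> 1 \<le> i"
  by (auto simp: in_entry_rows_iff in_skew_def)

lemma finite_entry_rows: "finite (entry_rows \<beta> \<gamma> T k)"
proof (rule finite_subset)
  show "entry_rows \<beta> \<gamma> T k \<subseteq> {1..length (part_conj \<beta>)}"
    by (auto simp: in_entry_rows_iff in_skew_def part_def split: if_splits)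
qed simp

lemma card_skew_row_le_1:
  assumes "\<forall>i. part (part_conj \<beta>) i - part (part_conj \<gamma>) i \<le> 1"
  shows "card {c. in_skew \<beta> \<gamma> i c} \<le> 1"
  using assms by (simp add: skew_row_eq)

lemma row_count_eq_indicator:
  assumes "\<forall>i. part (part_conj \<beta>) i - part (part_conj \<gamma>) i \<le> 1"
  shows "row_count \<beta> \<gamma> T k i = count (mset_set (entry_rows \<beta> \<gamma> T k)) i"
proof -
  have "row_count \<beta> \<gamma> T k i \<le> card {c. in_skew \<beta> \<gamma> i c}"
    unfolding row_count_def by (intro card_mono finite_skew_row) auto
  then have "row_count \<beta> \<gamma> T k i \<le> 1"
    using card_skew_row_le_1[OF assms, of i] by linarith
  then show ?thesis
    using finite_entry_rows[of \<beta> \<gamma> T k]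
    by (cases "i \<in> entry_rows \<beta> \<gamma> T k") (auto simp: entry_rows_def)
qed

lemma card_entry_rows:
  assumes "\<forall>i. part (part_conj \<beta>) i - part (part_conj \<gamma>) i \<le> 1"
  shows "card (entry_rows \<beta> \<gamma> T k) = entry_count \<beta> \<gamma> T k"
proof -
  define P where "P = {(i, c). in_skew \<beta> \<gamma> i c \<and> T i c = k}"
  have "inj_on fst P"
  proof (rule inj_onI)
    fix a b
    assume "a \<in> P" "b \<in> P" "fst a = fst b"
    moreover have "c = c'" if "in_skew \<beta> \<gamma> i c" "in_skew \<beta> \<gamma> i c'" for i c c'
      using that card_skew_row_le_1[OF assms, of i] card_le_Suc0_iff_eq[OF finite_skew_row]
      by auto
    ultimately show "a = b"
      by (auto simp: P_def)
  qed
  then have "card (fst ` P) = entry_count \<beta> \<gamma> T k"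
    by (simp add: card_image entry_count_def P_def)
  moreover have "fst ` P = entry_rows \<beta> \<gamma> T k"
    by (force simp: P_def in_entry_rows_iff)
  ultimately show ?thesis
    by simp
qed

lemma row_count_1_add_row_count_2:
  assumes "\<forall>i c. in_skew \<beta> \<gamma> i c \<longrightarrow> T i c \<in> {1, 2}" "1 \<le> i"
  shows "row_count \<beta> \<gamma> T 1 i + row_count \<beta> \<gamma> T 2 i
         = part (part_conj \<beta>) i - part (part_conj \<gamma>) i"
proof -
  have row: "{c. in_skew \<beta> \<gamma> i c}
        = {c. in_skew \<beta> \<gamma> i c \<and> T i c = 1} \<union> {c. in_skew \<beta> \<gamma> i c \<and> T i c = 2}"
    using assms(1) by auto
  have fin: "finite {c. in_skew \<beta> \<gamma> i c \<and> T i c = 1}" "finite {c. in_skew \<beta> \<gamma> i c \<and> T i c = 2}"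
    by (rule finite_subset[OF _ finite_skew_row], auto)+
  have "card {c. in_skew \<beta> \<gamma> i c} = row_count \<beta> \<gamma> T 1 i + row_count \<beta> \<gamma> T 2 i"
    unfolding row_count_def by (subst row, rule card_Un_disjoint[OF fin]) auto
  then show ?thesis
    using assms(2) by (simp add: skew_row_eq)
qed

lemma entry_count_2_le_entry_count_1:
  assumes "LR_tableau \<alpha> \<beta> \<gamma> T"
  shows "entry_count \<beta> \<gamma> T 2 \<le> entry_count \<beta> \<gamma> T 1"
proof -
  have "card {(i, c). in_skew \<beta> \<gamma> i c \<and> 0 < c \<and> T i c = 2}
        \<le> card {(i, c). in_skew \<beta> \<gamma> i c \<and> 0 < c \<and> T i c = 1}"
    using assms unfolding LR_tableau_def by blast
  moreover have "{(i, c). in_skew \<beta> \<gamma> i c \<and> 0 < c \<and> T i c = k}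
                 = {(i, c). in_skew \<beta> \<gamma> i c \<and> T i c = k}" for k
    by (auto simp: in_skew_def)
  ultimately show ?thesis
    by (simp add: entry_count_def)
qed

lemma D_Gamma_eq:
  assumes LR: "LR_tableau \<alpha> \<beta> \<gamma> T"
    and thin: "\<forall>i. part (part_conj \<beta>) i - part (part_conj \<gamma>) i \<le> 1"
  shows "D_Gamma \<alpha> \<beta> \<gamma> T =
    {D. (\<forall>(s, t)\<in>#D. 1 \<le> t \<and> enat t < s) \<and>
        image_mset fst D = replicate_mset (entry_count \<beta> \<gamma> T 1 - entry_count \<beta> \<gamma> T 2) \<infinity>
                           + mset_set (enat ` entry_rows \<beta> \<gamma> T 2) \<and>
        image_mset snd D = mset_set (entry_rows \<beta> \<gamma> T 1)}"
proof -
  define R1 R2 where "R1 = entry_rows \<beta> \<gamma> T 1" and "R2 = entry_rows \<beta> \<gamma> T 2"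
  have R: "finite R1" "finite R2" "0 \<notin> R1" "0 \<notin> R2"
    using finite_entry_rows entry_rows_pos unfolding R1_def R2_def by force+
  have counts: "part (part_conj \<alpha>) 1 = card R1" "part (part_conj \<alpha>) 2 = card R2"
    using LR card_entry_rows[OF thin] unfolding LR_tableau_def R1_def R2_def by auto
  have "card R2 \<le> card R1"
    using entry_count_2_le_entry_count_1[OF LR] card_entry_rows[OF thin]
    unfolding R1_def R2_def by metis
  have degree: "part (part_conj \<beta>) i - part (part_conj \<gamma>) i
                = count (mset_set R1) i + count (mset_set R2) i" if "1 \<le> i" for i
    using row_count_1_add_row_count_2[of \<beta> \<gamma> T, OF _ that] LR row_count_eq_indicator[OF thin]
    unfolding LR_tableau_def R1_def R2_def by metis
  define n where "n = card R1 - card R2"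
  have arcs: "size (filter_mset (\<lambda>(s, t). s \<noteq> \<infinity>) D) = card R2"
    if "image_mset fst D = replicate_mset n \<infinity> + mset_set (enat ` R2)"
       "image_mset snd D = mset_set R1" for D :: "(enat \<times> nat) multiset"
  proof -
    have "size D = card R1"
      using that(2) by (metis size_image_mset size_mset_set)
    moreover have "count (image_mset fst D) \<infinity> = n"
      using that(1) R(2) by (auto simp: count_mset_set')
    ultimately show ?thesis
      using size_filter_finite_sources[of D] \<open>card R2 \<le> card R1\<close> by (simp add: n_def)
  qed
  have D_Gamma_iff: "D \<in> D_Gamma \<alpha> \<beta> \<gamma> T \<longleftrightarrow>
    (\<forall>(s, t)\<in>#D. 1 \<le> t \<and> enat t < s) \<and> size (filter_mset (\<lambda>(s, t). s \<noteq> \<infinity>) D) = card R2 \<and>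
    size (filter_mset (\<lambda>(s, t). s = \<infinity>) D) = n \<and>
    (\<forall>i\<ge>1. size (filter_mset (\<lambda>(s, t). s = enat i \<or> t = i) D)
             = count (mset_set R1) i + count (mset_set R2) i) \<and>
    (\<forall>i\<ge>1. size (filter_mset (\<lambda>(s, t). s = enat i) D) = count (mset_set R2) i)" for D
    unfolding D_Gamma_def arc_diagram_def has_LR_type_def counts n_def mem_Collect_eq
    by (simp add: degree row_count_eq_indicator[OF thin] R2_def[symmetric])
  have "entry_count \<beta> \<gamma> T 1 - entry_count \<beta> \<gamma> T 2 = n"
    using card_entry_rows[OF thin] by (simp add: n_def R1_def R2_def)
  moreover have "D \<in> D_Gamma \<alpha> \<beta> \<gamma> T \<longleftrightarrow> (\<forall>(s, t)\<in>#D. 1 \<le> t \<and> enat t < s) \<and>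
      image_mset fst D = replicate_mset n \<infinity> + mset_set (enat ` R2) \<and> image_mset snd D = mset_set R1"
    for D
  proof (cases "\<forall>(s, t)\<in>#D. 1 \<le> t \<and> enat t < s")
    case True
    from D_Gamma_iff[of D] arc_diagram_counts_iff[OF True R, of n] arcs[of D] True show ?thesis
      by argo
  qed (use D_Gamma_iff[of D] in argo)
  ultimately show ?thesis
    unfolding R1_def R2_def by blast
qed

theorem mainTheorem5:
  fixes \<alpha> \<beta> \<gamma> :: "nat list" and T :: "nat \<Rightarrow> nat \<Rightarrow> nat" and x :: nat
  assumes "is_partition \<alpha>" and "is_partition \<beta>" and "is_partition \<gamma>"
    and "part \<alpha> 1 \<le> 2"
    and "LR_tableau \<alpha> \<beta> \<gamma> T"
    and "x = entry_count \<beta> \<gamma> T 1"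
    and "entry_count \<beta> \<gamma> T 2 = x \<or> entry_count \<beta> \<gamma> T 2 + 1 = x"
    and "\<forall>i. part (part_conj \<beta>) i - part (part_conj \<gamma>) i \<le> 1"
    and "\<forall>i j. row_count \<beta> \<gamma> T 2 j > 0 \<and> row_count \<beta> \<gamma> T 1 i > 0 \<longrightarrow> j > i"
  shows "\<exists>f. bij_betw f (D_Gamma \<alpha> \<beta> \<gamma> T) {w. w permutes {1..x}} \<and>
             (\<forall>\<Delta>\<in>D_Gamma \<alpha> \<beta> \<gamma> T. \<forall>\<Delta>'\<in>D_Gamma \<alpha> \<beta> \<gamma> T.
                arc_le \<Delta> \<Delta>' \<longleftrightarrow> bruhat_le x (f \<Delta>) (f \<Delta>'))"
proof -
  define R1 R2 where "R1 = entry_rows \<beta> \<gamma> T 1" and "R2 = entry_rows \<beta> \<gamma> T 2"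
  have card: "card R1 = x" "card R2 = entry_count \<beta> \<gamma> T 2"
    using card_entry_rows[OF assms(8)] assms(6) by (simp_all add: R1_def R2_def)
  have R: "finite R1" "finite R2" "0 \<notin> R1"
    using finite_entry_rows entry_rows_pos unfolding R1_def R2_def by force+
  have "\<forall>i\<in>R1. \<forall>j\<in>R2. i < j"
    using assms(9) unfolding R1_def R2_def entry_rows_def by blast
  moreover have "card R2 \<le> card R1" "card R1 \<le> card R2 + 1"
    using assms(7) unfolding card by arith+
  ultimately obtain src tgt where frame: "arc_frame x src tgt"
    and "image_mset src (mset_set {1..x}) = replicate_mset (x - card R2) \<infinity> + mset_set (enat ` R2)"
    and "image_mset tgt (mset_set {1..x}) = mset_set R1"
    using arc_frame_exists[OF R] unfolding card(1) by blast
  moreover have "D_Gamma \<alpha> \<beta> \<gamma> T =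
    {D. (\<forall>(s, t)\<in>#D. 1 \<le> t \<and> enat t < s) \<and>
        image_mset fst D = replicate_mset (x - card R2) \<infinity> + mset_set (enat ` R2) \<and>
        image_mset snd D = mset_set R1}"
    using D_Gamma_eq[OF assms(5,8)] by (simp add: R1_def R2_def assms(6) card_entry_rows[OF assms(8)])
  ultimately have "D_Gamma \<alpha> \<beta> \<gamma> T = arc_frame.diagram_of x src tgt ` {w. w permutes {1..x}}"
    using arc_frame.diagrams_with_projections[OF frame] by simp
  then show ?thesis
    using arc_frame.diagrams_order_iso_bruhat[OF frame] by simp
qed

end
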